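(* Consider the ergodic Markov process described in the context. The dimension of the (complex) vector space of absolutely convergent solutions $q:W\to\mathbb C$ of the inner equations is at most $2^cK$.
   Context: Fix integers $c\ge 1$ and $K\ge 1$. Consider an irreducible continuous-time Markov process on the state space $V\cup W$, where $V$ is a finite set and $W=\{\mathbf n=(n_0,n_1,\dots,n_c): n_0\in\{0,1,2,\dots\},\ n_i\in\{0,1\},\ i=1,\dots,c\}$. For each $i\in\{1,\dots,c\}$ and each integer $k\le K$ there are nonnegative rates $a_{k,i},b_{k,i},c_{k,i},d_{k,i}$. From a state $\mathbf n\in W$, for each $i$ and each $k\in\{-n_0,\dots,K\}$, the process jumps (changing only coordinates $0$ and $i$) from $(n_0,n_i)=(n_0,0)$ to $(n_0+k,1)$ at rate $a_{k,i}$ and to $(n_0+k,0)$ at rate $b_{k,i}$, and from $(n_0,n_i)=(n_0,1)$ to $(n_0+k,1)$ at rate $c_{k,i}$ and to $(n_0+k,0)$ at rate $d_{k,i}$; moreover from $\mathbf n$ it jumps into $V$ with total rate $\sum_{i=1}^c\sum_{k\le -n_0-1}\bigl((1-n_i)(a_{k,i}+b_{k,i})+n_i(c_{k,i}+d_{k,i})\bigr)$. There are no other transitions out of $W$. From states in $V$ no transitions are possible to states $\mathbf n\in W$ with $n_0\ge K$. All total outgoing rates are finite. The process is assumed ergodic. Let $e_i$ be the vector of length $c+1$ (indexed $0,\dots,c$) with a $1$ in position $i$ and zeros elsewhere. The inner equations are, for a function $q:W\to\mathbb C$ and all $\mathbf n\in W$ with $n_0\ge K$: \[\sum_{i=1}^c\sum_{k=-\infty}^K\bigl((1-n_i)(a_{k,i}+b_{k,i})+n_i(c_{k,i}+d_{k,i})\bigr)q(\mathbf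 n)=\sum_{i=1}^c\sum_{k=-\infty}^K\Bigl((1-n_i)\bigl(b_{k,i}q(\mathbf n-ke_0)+d_{k,i}q(\mathbf n-ke_0+e_i)\bigr)+n_i\bigl(a_{k,i}q(\mathbf n-ke_0-e_i)+c_{k,i}q(\mathbf n-ke_0)\bigr)\Bigr).\] A solution $q$ is called absolutely convergent if $\sum_{\mathbf n\in W}|q(\mathbf n)|<\infty$. *)

theory Defs
  imports "HOL-Analysis.Analysis" "HOL-Library.Function_Algebras"
begin

text \<open>A state of W is encoded as a function n :: nat => nat, where n 0 is the
  level n_0 and n i (1 <= i <= c) is the binary coordinate n_i; all other
  coordinates are 0.\<close>

definition Wset :: "nat \<Rightarrow> (nat \<Rightarrow> nat) set" where
  "Wset c = {n. (\<forall>i\<in>{1..c}. n i \<le> 1) \<and> (\<forall>i>c. n i = 0)}"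

text \<open>Replace the level n_0 by n_0 + k (k integer; the caller ensures n_0 + k >= 0).\<close>
definition shift0 :: "(nat \<Rightarrow> nat) \<Rightarrow> int \<Rightarrow> (nat \<Rightarrow> nat)" where
  "shift0 n k = n(0 := nat (int (n 0) + k))"

definition jump_rate ::
  "(int \<Rightarrow> nat \<Rightarrow> real) \<Rightarrow> (int \<Rightarrow> nat \<Rightarrow> real) \<Rightarrow> (int \<Rightarrow> nat \<Rightarrow> real) \<Rightarrow> (int \<Rightarrow> nat \<Rightarrow> real)
   \<Rightarrow> (nat \<Rightarrow> nat) \<Rightarrow> nat \<Rightarrow> int \<Rightarrow> nat \<Rightarrow> real" where
  "jump_rate a b cc d n i k j =
     (if n i = 0 then (if j = 1 then a k i else b k i)
      else (if j = 1 then cc k i else d k i))"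

text \<open>Continuous-time Markov chain with off-diagonal rates Q on the state space S:
  irreducible, and ergodic (positive recurrent), the latter expressed by the
  existence of a stationary probability distribution pi (global balance equations).
  (All chains considered here are non-explosive, since their rates are bounded.)\<close>
definition irreducible_ctmc :: "'s set \<Rightarrow> ('s \<Rightarrow> 's \<Rightarrow> real) \<Rightarrow> bool" where
  "irreducible_ctmc S Q \<longleftrightarrow>
     (\<forall>x\<in>S. \<forall>y\<in>S. (x, y) \<in> {(u, v). u \<in> S \<and> v \<in> S \<and> u \<noteq> v \<and> Q u v > 0}\<^sup>*)"

definition ergodic_ctmc :: "'s set \<Rightarrow> ('s \<Rightarrow> 's \<Rightarrow> real) \<Rightarrow> bool" where
  "ergodic_ctmc S Q \<longleftrightarrow> irreducible_ctmc S Q \<and>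
     (\<exists>\<pi>. (\<forall>x\<in>S. \<pi> x \<ge> 0) \<and> (\<pi> has_sum 1) S \<and>
        (\<forall>y\<in>S. (\<Sum>\<^sub>\<infinity>x\<in>S - {y}. \<pi> x * Q x y) = \<pi> y * (\<Sum>\<^sub>\<infinity>z\<in>S - {y}. Q y z)))"

definition inner_eq ::
  "nat \<Rightarrow> int \<Rightarrow> (int \<Rightarrow> nat \<Rightarrow> real) \<Rightarrow> (int \<Rightarrow> nat \<Rightarrow> real) \<Rightarrow> (int \<Rightarrow> nat \<Rightarrow> real) \<Rightarrow> (int \<Rightarrow> nat \<Rightarrow> real)
   \<Rightarrow> ((nat \<Rightarrow> nat) \<Rightarrow> complex) \<Rightarrow> (nat \<Rightarrow> nat) \<Rightarrow> bool" where
  "inner_eq c K a b cc d q n \<longleftrightarrow>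
     (\<Sum>i=1..c. \<Sum>\<^sub>\<infinity>k\<in>{..K}.
        complex_of_real ((1 - real (n i)) * (a k i + b k i) + real (n i) * (cc k i + d k i)) * q n)
   = (\<Sum>i=1..c. \<Sum>\<^sub>\<infinity>k\<in>{..K}.
        complex_of_real (1 - real (n i)) *
          (complex_of_real (b k i) * q (shift0 n (-k)) + complex_of_real (d k i) * q ((shift0 n (-k))(i := 1)))
      + complex_of_real (real (n i)) *
          (complex_of_real (a k i) * q ((shift0 n (-k))(i := 0)) + complex_of_real (cc k i) * q (shift0 n (-k))))"

definition abs_conv_solutions ::
  "nat \<Rightarrow> int \<Rightarrow> (int \<Rightarrow> nat \<Rightarrow> real) \<Rightarrow> (int \<Rightarrow> nat \<Rightarrow> real) \<Rightarrow> (int \<Rightarrow> nat \<Rightarrow> real) \<Rightarrow> (int \<Rightarrow> nat \<Rightarrow> real)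
   \<Rightarrow> ((nat \<Rightarrow> nat) \<Rightarrow> complex) set" where
  "abs_conv_solutions c K a b cc d =
     {q. (\<forall>n. n \<notin> Wset c \<longrightarrow> q n = 0) \<and> (\<lambda>n. norm (q n)) summable_on Wset c \<and>
         (\<forall>n\<in>Wset c. int (n 0) \<ge> K \<longrightarrow> inner_eq c K a b cc d q n)}"

definition cscale :: "complex \<Rightarrow> ('a \<Rightarrow> complex) \<Rightarrow> ('a \<Rightarrow> complex)" where
  "cscale z f = (\<lambda>x. z * f x)"

end

theory Submission
  imports Defs
begin

text \<open>Let q be an absolutely convergent solution of the inner equations that vanishes on the
  2^c K states of level below K. Taking absolute values in the inner equation at n bounds
  |q n| times the total outflow rate of n by the weighted inflow, the sum of
  rate(m \<rightarrow> n) |q m| over all m; below level K this bound is trivial. Summed over W, the inflows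
  add up to the sum of |q m| times the rate of the jumps of m that stay in W, whereas the left
  hand sides also count the jumps into V. Hence every bound is an equality and |q m| times the
  exit rate into V vanishes, so q vanishes at every state jumping with positive rate into V or
  into a zero of q. By irreducibility every state reaches the zero (0,\<dots>,0), whence q = 0.
  So restriction to the low levels is injective and linear on the space of solutions, whose
  dimension is therefore at most 2^c K.\<close>

lemma Wset_binary: "n \<in> Wset c \<Longrightarrow> i \<in> {1..c} \<Longrightarrow> n i = 0 \<or> n i = 1"
  unfolding Wset_def by force

lemma Wset_shift0_upd: "n \<in> Wset c \<Longrightarrow> i \<in> {1..c} \<Longrightarrow> p \<le> 1 \<Longrightarrow> (shift0 n k)(i := p) \<in> Wset c"
  unfolding Wset_def shift0_def by auto

lemma shift0_apply_0 [simp]: "shift0 n k 0 = nat (int (n 0) + k)"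
  by (simp add: shift0_def)

lemma shift0_apply_nonzero [simp]: "j \<noteq> 0 \<Longrightarrow> shift0 n k j = n j"
  by (simp add: shift0_def)

lemma card_low_levels:
  "finite {n \<in> Wset c. int (n 0) < K} \<and> card {n \<in> Wset c. int (n 0) < K} \<le> 2 ^ c * nat K"
proof -
  let ?state = "\<lambda>(l :: nat, T :: nat set) i. if i = 0 then l else if i \<in> T then 1 else 0"
  have sub: "{n \<in> Wset c. int (n 0) < K} \<subseteq> ?state ` ({..<nat K} \<times> Pow {1..c})"
  proof
    fix n assume n: "n \<in> {n \<in> Wset c. int (n 0) < K}"
    have "n = ?state (n 0, {i \<in> {1..c}. n i = 1})"
    proof
      fix i show "n i = ?state (n 0, {i \<in> {1..c}. n i = 1}) i"
        using n Wset_binary[of n c i] unfolding Wset_def by (cases "i = 0") (auto, force)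
    qed
    moreover have "(n 0, {i \<in> {1..c}. n i = 1}) \<in> {..<nat K} \<times> Pow {1..c}" using n by auto
    ultimately show "n \<in> ?state ` ({..<nat K} \<times> Pow {1..c})" by blast
  qed
  have "card {n \<in> Wset c. int (n 0) < K} \<le> card (?state ` ({..<nat K} \<times> Pow {1..c}))"
    by (rule card_mono[OF _ sub]) auto
  also have "\<dots> \<le> card ({..<nat K} \<times> Pow {1..c})" by (rule card_image_le) auto
  also have "\<dots> = 2 ^ c * nat K" by (simp add: card_cartesian_product card_Pow)
  finally show ?thesis using finite_subset[OF sub] by auto
qed

lemma has_sum_Times_finite:
  fixes f :: "'a \<times> 'b \<Rightarrow> 'c::topological_comm_monoid_add"
  assumes "finite A" and "\<And>x. x \<in> A \<Longrightarrow> ((\<lambda>y. f (x, y)) has_sum s x) B"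
  shows "(f has_sum (\<Sum>x\<in>A. s x)) (A \<times> B)"
proof -
  have "(f has_sum s x) (Pair x ` B)" if "x \<in> A" for x
    using assms(2)[OF that] by (subst has_sum_reindex) (auto simp: inj_on_def o_def)
  moreover have "A \<times> B = (\<Union>x\<in>A. Pair x ` B)" by auto
  ultimately show ?thesis
    using sum_has_sum[OF assms(1), where f = f and s = s and B = "\<lambda>x. Pair x ` B"] by auto
qed

lemma norm_le_infsum_norm:
  assumes "(\<lambda>x. norm (f x)) summable_on A" and "\<forall>x. x \<notin> A \<longrightarrow> f x = 0"
  shows "norm (f x) \<le> (\<Sum>\<^sub>\<infinity>y\<in>A. norm (f y))"
proof (cases "x \<in> A")
  case True
  then have "(\<Sum>\<^sub>\<infinity>y\<in>{x}. norm (f y)) \<le> (\<Sum>\<^sub>\<infinity>y\<in>A. norm (f y))"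
    by (intro infsum_mono2 assms(1)) auto
  then show ?thesis by simp
qed (use assms(2) in \<open>simp add: infsum_nonneg\<close>)

lemma irreducible_ctmc_zero_propagation:
  assumes "irreducible_ctmc S Q" and "y \<in> S" and "f y = 0"
    and "\<And>u v. u \<in> S \<Longrightarrow> v \<in> S \<Longrightarrow> u \<noteq> v \<Longrightarrow> Q u v > 0 \<Longrightarrow> f v = 0 \<Longrightarrow> f u = 0"
    and "x \<in> S"
  shows "f x = 0"
proof -
  have "(x, y) \<in> {(u, v). u \<in> S \<and> v \<in> S \<and> u \<noteq> v \<and> Q u v > 0}\<^sup>*"
    using assms(1,2,5) unfolding irreducible_ctmc_def by blast
  then show ?thesis
    by (induction rule: converse_rtrancl_induct) (use assms(3,4) in auto)
qed

lemma vector_space_cscale: "vector_space (cscale :: complex \<Rightarrow> ('a \<Rightarrow> complex) \<Rightarrow> 'a \<Rightarrow> complex)"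
  by unfold_locales (auto simp: cscale_def fun_eq_iff algebra_simps)

lemma restriction_eq_sum_cscale:
  fixes f :: "'a \<Rightarrow> complex"
  assumes "finite F"
  shows "(\<lambda>x. if x \<in> F then f x else 0) = (\<Sum>y\<in>F. cscale (f y) (\<lambda>x. if x = y then 1 else 0))"
proof
  fix x
  have "(\<Sum>y\<in>F. cscale (f y) (\<lambda>x. if x = y then 1 else 0)) x = (\<Sum>y\<in>F. if y = x then f y else 0)"
    by (induction F rule: infinite_finite_induct) (auto simp: cscale_def)
  then show "(if x \<in> F then f x else 0) = (\<Sum>y\<in>F. cscale (f y) (\<lambda>x. if x = y then 1 else 0)) x"
    using assms by simp
qed

lemma independent_card_le_determining_set:
  fixes S :: "('a \<Rightarrow> complex) set"
  assumes S: "module.subspace cscale S" and F: "finite F"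
    and determined: "\<And>f. f \<in> S \<Longrightarrow> \<forall>x\<in>F. f x = 0 \<Longrightarrow> f = 0"
    and B: "B \<subseteq> S" and independent: "\<not> module.dependent cscale B"
  shows "finite B \<and> card B \<le> card F"
proof -
  interpret fs: vector_space "cscale :: complex \<Rightarrow> ('a \<Rightarrow> complex) \<Rightarrow> _"
    by (rule vector_space_cscale)
  define R where "R f = (\<lambda>x. if x \<in> F then f x else 0)" for f :: "'a \<Rightarrow> complex"
  let ?e = "\<lambda>y x. if x = y then 1 else 0 :: complex"
  interpret R: module_hom "cscale :: complex \<Rightarrow> ('a \<Rightarrow> complex) \<Rightarrow> _" cscale R
    by unfold_locales (auto simp: R_def cscale_def fun_eq_iff algebra_simps)
  have inj_span: "inj_on R (fs.span B)"
  proof (rule inj_onI)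
    fix f g assume f: "f \<in> fs.span B" and g: "g \<in> fs.span B" and "R f = R g"
    have "\<forall>x\<in>F. (f - g) x = 0"
    proof
      fix x assume "x \<in> F"
      then show "(f - g) x = 0" using fun_cong[OF \<open>R f = R g\<close>, of x] by (simp add: R_def)
    qed
    moreover have "f - g \<in> S" using fs.span_diff[OF f g] fs.span_minimal[OF B S] by blast
    ultimately show "f = g" using determined[of "f - g"] by simp
  qed
  then have independent_image: "\<not> fs.dependent (R ` B)"
    by (rule R.independent_injective_image[OF independent])
  have inj: "inj_on R B" using inj_on_subset[OF inj_span fs.span_superset] .
  have "R f \<in> fs.span (?e ` F)" for f
    unfolding R_def restriction_eq_sum_cscale[OF F]
    by (intro fs.span_sum fs.span_scale) (auto intro: fs.span_base)
  then have "R ` B \<subseteq> fs.span (?e ` F)" by blast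
  then have "finite (R ` B) \<and> card (R ` B) \<le> card (?e ` F)"
    by (rule fs.independent_span_bound[OF finite_imageI[OF F] independent_image])
  then show ?thesis
    using card_image_le[OF F, of ?e] finite_image_iff[OF inj] card_image[OF inj] by simp
qed

text \<open>source n i k p is the state with i-th coordinate p from which the jump of type (i, k) that
  sets coordinate i to n i leads to n.\<close>

definition source :: "(nat \<Rightarrow> nat) \<Rightarrow> nat \<Rightarrow> int \<Rightarrow> nat \<Rightarrow> nat \<Rightarrow> nat" where
  "source n i k p = (shift0 n (-k))(i := p)"

locale qbd_rates =
  fixes c :: nat and K :: int and a b cc d :: "int \<Rightarrow> nat \<Rightarrow> real"
  assumes K_pos: "K \<ge> 1"
    and rates_nonneg: "\<forall>i\<in>{1..c}. \<forall>k\<le>K. a k i \<ge> 0 \<and> b k i \<ge> 0 \<and> cc k i \<ge> 0 \<and> d k i \<ge> 0"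
    and rates_summable: "\<forall>i\<in>{1..c}. (\<lambda>k. a k i) summable_on {..K} \<and> (\<lambda>k. b k i) summable_on {..K}
                      \<and> (\<lambda>k. cc k i) summable_on {..K} \<and> (\<lambda>k. d k i) summable_on {..K}"
begin

definition type_rate :: "(nat \<Rightarrow> nat) \<Rightarrow> nat \<Rightarrow> int \<Rightarrow> real" where
  "type_rate n i k = (1 - real (n i)) * (a k i + b k i) + real (n i) * (cc k i + d k i)"

definition total_rate :: "(nat \<Rightarrow> nat) \<Rightarrow> real" where
  "total_rate n = (\<Sum>i=1..c. \<Sum>\<^sub>\<infinity>k\<in>{..K}. type_rate n i k)"

definition internal_rate :: "(nat \<Rightarrow> nat) \<Rightarrow> real" where
  "internal_rate n = (\<Sum>i=1..c. \<Sum>k\<in>{- int (n 0)..K}. type_rate n i k)"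

definition exit_rate :: "(nat \<Rightarrow> nat) \<Rightarrow> real" where
  "exit_rate n = (\<Sum>i=1..c. \<Sum>\<^sub>\<infinity>k\<in>{..- int (n 0) - 1}. type_rate n i k)"

definition rate_bound :: real where
  "rate_bound = (\<Sum>i=1..c. \<Sum>\<^sub>\<infinity>k\<in>{..K}. a k i + b k i + cc k i + d k i)"

definition source_rate :: "(nat \<Rightarrow> nat) \<Rightarrow> nat \<Rightarrow> int \<Rightarrow> nat \<Rightarrow> real" where
  "source_rate n i k p = jump_rate a b cc d (source n i k p) i k (n i)"

definition sources :: "(nat \<Rightarrow> nat) \<Rightarrow> (nat \<times> nat \<times> int) set" where
  "sources n = {0, 1} \<times> {1..c} \<times> {..min K (int (n 0))}"

definition jumps :: "(nat \<Rightarrow> nat) \<Rightarrow> (nat \<times> nat \<times> int) set" where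
  "jumps n = {0, 1} \<times> {1..c} \<times> {- int (n 0)..K}"

definition inflow_term :: "((nat \<Rightarrow> nat) \<Rightarrow> complex) \<Rightarrow> (nat \<Rightarrow> nat) \<Rightarrow> nat \<Rightarrow> int \<Rightarrow> complex" where
  "inflow_term q n i k =
     complex_of_real (1 - real (n i)) *
       (complex_of_real (b k i) * q (shift0 n (-k)) + complex_of_real (d k i) * q ((shift0 n (-k))(i := 1)))
   + complex_of_real (real (n i)) *
       (complex_of_real (a k i) * q ((shift0 n (-k))(i := 0)) + complex_of_real (cc k i) * q (shift0 n (-k)))"

definition abs_inflow :: "((nat \<Rightarrow> nat) \<Rightarrow> complex) \<Rightarrow> (nat \<Rightarrow> nat) \<Rightarrow> real" where
  "abs_inflow q n = infsum (\<lambda>(p, i, k). source_rate n i k p * norm (q (source n i k p))) (sources n)"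

lemma type_rate_summable:
  assumes "i \<in> {1..c}" and "X \<subseteq> {..K}"
  shows "(\<lambda>k. type_rate n i k) summable_on X"
proof -
  have "(\<lambda>k. type_rate n i k) summable_on {..K}"
    unfolding type_rate_def using rates_summable assms(1)
    by (auto intro!: summable_on_add summable_on_cmult_right)
  then show ?thesis using assms(2) summable_on_subset_banach by blast
qed

lemma type_rate_bounds:
  "n \<in> Wset c \<Longrightarrow> i \<in> {1..c} \<Longrightarrow> k \<le> K \<Longrightarrow>
     0 \<le> type_rate n i k \<and> type_rate n i k \<le> a k i + b k i + cc k i + d k i"
  using Wset_binary[of n c i] rates_nonneg by (auto simp: type_rate_def)

lemma jump_rate_nonneg: "i \<in> {1..c} \<Longrightarrow> k \<le> K \<Longrightarrow> 0 \<le> jump_rate a b cc d m i k j"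
  using rates_nonneg by (auto simp: jump_rate_def)

lemma jump_rate_sum:
  "m \<in> Wset c \<Longrightarrow> i \<in> {1..c} \<Longrightarrow> jump_rate a b cc d m i k 0 + jump_rate a b cc d m i k 1 = type_rate m i k"
  using Wset_binary[of m c i] by (auto simp: jump_rate_def type_rate_def)

lemma sum_jump_rates:
  assumes "m \<in> Wset c"
  shows "sum (\<lambda>(j, i, k). jump_rate a b cc d m i k j) (jumps m) = internal_rate m"
proof -
  have "sum (\<lambda>(j, i, k). jump_rate a b cc d m i k j) (jumps m)
      = (\<Sum>i=1..c. \<Sum>k\<in>{- int (m 0)..K}. jump_rate a b cc d m i k 0 + jump_rate a b cc d m i k 1)"
    by (simp add: jumps_def sum.cartesian_product[symmetric] sum.distrib)
  also have "\<dots> = internal_rate m"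
    unfolding internal_rate_def
    by (intro sum.cong refl) (simp add: jump_rate_sum[OF assms, unfolded One_nat_def])
  finally show ?thesis .
qed

lemma jump_with_nonzero_rate:
  assumes "(\<Sum>i=1..c. \<Sum>k\<in>{- int (m 0)..K}. \<Sum>j\<in>{0,1}.
             if (shift0 m k)(i := j) = n then jump_rate a b cc d m i k j else 0) \<noteq> 0"
  obtains i k j where "i \<in> {1..c}" and "k \<in> {- int (m 0)..K}" and "j \<le> 1"
    and "(shift0 m k)(i := j) = n" and "jump_rate a b cc d m i k j \<noteq> 0"
proof -
  from assms obtain i where i: "i \<in> {1..c}" and sum_k: "(\<Sum>k\<in>{- int (m 0)..K}. \<Sum>j\<in>{0,1}.
      if (shift0 m k)(i := j) = n then jump_rate a b cc d m i k j else 0) \<noteq> 0"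
    by (rule sum.not_neutral_contains_not_neutral)
  from sum_k obtain k where k: "k \<in> {- int (m 0)..K}" and sum_j:
    "(\<Sum>j\<in>{0,1}. if (shift0 m k)(i := j) = n then jump_rate a b cc d m i k j else 0) \<noteq> 0"
    by (rule sum.not_neutral_contains_not_neutral)
  from sum_j obtain j where "j \<in> {0, 1}"
    and "(if (shift0 m k)(i := j) = n then jump_rate a b cc d m i k j else 0) \<noteq> 0"
    by (rule sum.not_neutral_contains_not_neutral)
  then show thesis using that i k by (auto split: if_splits)
qed

lemma total_rate_bounds: "n \<in> Wset c \<Longrightarrow> 0 \<le> total_rate n \<and> total_rate n \<le> rate_bound"
  unfolding total_rate_def rate_bound_def using type_rate_bounds rates_summable
  by (auto intro!: sum_nonneg infsum_nonneg sum_mono infsum_mono type_rate_summable summable_on_add)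

lemma total_rate_split:
  assumes "n \<in> Wset c"
  shows "total_rate n = internal_rate n + exit_rate n"
proof -
  have "(\<Sum>\<^sub>\<infinity>k\<in>{..K}. type_rate n i k)
      = (\<Sum>k\<in>{- int (n 0)..K}. type_rate n i k) + (\<Sum>\<^sub>\<infinity>k\<in>{..- int (n 0) - 1}. type_rate n i k)"
    if "i \<in> {1..c}" for i
  proof -
    have "{..K} = {- int (n 0)..K} \<union> {..- int (n 0) - 1}" using K_pos by auto
    then show ?thesis
      using infsum_Un_disjoint[OF _ type_rate_summable[OF that]] K_pos by auto
  qed
  then show ?thesis unfolding total_rate_def internal_rate_def exit_rate_def by (simp add: sum.distrib)
qed

lemma internal_rate_nonneg: "n \<in> Wset c \<Longrightarrow> 0 \<le> internal_rate n"
  unfolding internal_rate_def using type_rate_bounds by (auto intro!: sum_nonneg)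

lemma exit_rate_nonneg: "n \<in> Wset c \<Longrightarrow> 0 \<le> exit_rate n"
  unfolding exit_rate_def using type_rate_bounds K_pos by (auto intro!: sum_nonneg infsum_nonneg)

lemma inner_eq_iff:
  "inner_eq c K a b cc d q n \<longleftrightarrow>
     complex_of_real (total_rate n) * q n = (\<Sum>i=1..c. \<Sum>\<^sub>\<infinity>k\<in>{..K}. inflow_term q n i k)"
proof -
  have "(\<Sum>\<^sub>\<infinity>k\<in>{..K}. complex_of_real (type_rate n i k) * q n)
      = complex_of_real (\<Sum>\<^sub>\<infinity>k\<in>{..K}. type_rate n i k) * q n" if "i \<in> {1..c}" for i
  proof -
    have "(\<Sum>\<^sub>\<infinity>k\<in>{..K}. complex_of_real (type_rate n i k))
        = complex_of_real (\<Sum>\<^sub>\<infinity>k\<in>{..K}. type_rate n i k)"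
      by (rule infsumI[OF has_sum_of_real[OF has_sum_infsum[OF type_rate_summable[OF that order_refl]]]])
    then show ?thesis by (simp add: infsum_cmult_left')
  qed
  then have "(\<Sum>i=1..c. \<Sum>\<^sub>\<infinity>k\<in>{..K}. complex_of_real (type_rate n i k) * q n)
      = complex_of_real (total_rate n) * q n"
    by (simp add: total_rate_def sum_distrib_right)
  then show ?thesis by (simp add: inner_eq_def type_rate_def inflow_term_def)
qed

lemma inflow_term_eq:
  assumes "n \<in> Wset c" and "i \<in> {1..c}"
  shows "inflow_term q n i k =
    complex_of_real (source_rate n i k 0) * q (source n i k 0)
    + complex_of_real (source_rate n i k 1) * q (source n i k 1)"
proof -
  have i: "i \<noteq> 0" using assms(2) by auto
  then have unchanged: "(shift0 n (-k))(i := n i) = shift0 n (-k)"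
    by (auto simp: fun_eq_iff)
  from Wset_binary[OF assms] show ?thesis
  proof
    assume "n i = 0"
    then show ?thesis
      using i unchanged by (simp add: inflow_term_def source_rate_def jump_rate_def source_def)
  next
    assume "n i = 1"
    then show ?thesis
      using i unchanged by (simp add: inflow_term_def source_rate_def jump_rate_def source_def)
  qed
qed

lemma source_rate_nonneg: "i \<in> {1..c} \<Longrightarrow> k \<le> K \<Longrightarrow> 0 \<le> source_rate n i k p"
  by (simp add: source_rate_def jump_rate_nonneg)

lemma source_rate_summable:
  assumes "i \<in> {1..c}" and "X \<subseteq> {..K}"
  shows "(\<lambda>k. source_rate n i k p) summable_on X"
proof -
  have "i \<noteq> 0" using assms(1) by auto
  then have "(\<lambda>k. source_rate n i k p) summable_on {..K}"
    using rates_summable assms(1)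
    by (cases "p = 0"; cases "n i = 1") (auto simp: source_rate_def jump_rate_def source_def)
  then show ?thesis using assms(2) summable_on_subset_banach by blast
qed

lemma norm_inflow_term_le:
  assumes "n \<in> Wset c" and "i \<in> {1..c}" and "k \<le> K"
  shows "norm (inflow_term q n i k) \<le>
    source_rate n i k 0 * norm (q (source n i k 0)) + source_rate n i k 1 * norm (q (source n i k 1))"
proof -
  have "norm (inflow_term q n i k) \<le> norm (complex_of_real (source_rate n i k 0) * q (source n i k 0))
      + norm (complex_of_real (source_rate n i k 1) * q (source n i k 1))"
    unfolding inflow_term_eq[OF assms(1,2)] by (rule norm_triangle_ineq)
  then show ?thesis using source_rate_nonneg[OF assms(2,3)] by (simp add: norm_mult)
qed

context
  fixes q :: "(nat \<Rightarrow> nat) \<Rightarrow> complex" and B :: real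
  assumes bounded: "\<forall>x. norm (q x) \<le> B"
begin

lemma source_term_summable:
  assumes "i \<in> {1..c}" and "X \<subseteq> {..K}"
  shows "(\<lambda>k. source_rate n i k p * norm (q (source n i k p))) summable_on X"
proof (rule summable_on_comparison_test)
  show "(\<lambda>k. source_rate n i k p * B) summable_on X"
    by (intro summable_on_cmult_left source_rate_summable assms)
qed (use assms bounded source_rate_nonneg in \<open>auto intro!: mult_left_mono\<close>)

lemma norm_inflow_term_summable:
  assumes "n \<in> Wset c" and "i \<in> {1..c}"
  shows "(\<lambda>k. norm (inflow_term q n i k)) summable_on {..K}"
proof (rule summable_on_comparison_test)
  show "(\<lambda>k. source_rate n i k 0 * norm (q (source n i k 0))
      + source_rate n i k 1 * norm (q (source n i k 1))) summable_on {..K}"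
    by (intro summable_on_add source_term_summable assms(2)) auto
qed (use norm_inflow_term_le[OF assms] in auto)

lemma inflow_term_summable:
  "n \<in> Wset c \<Longrightarrow> i \<in> {1..c} \<Longrightarrow> (\<lambda>k. inflow_term q n i k) summable_on {..K}"
  using norm_inflow_term_summable abs_summable_summable by blast

lemma abs_inflow_has_sum:
  "((\<lambda>(p, i, k). source_rate n i k p * norm (q (source n i k p))) has_sum
     (\<Sum>p\<in>{0, 1}. \<Sum>i=1..c. \<Sum>\<^sub>\<infinity>k\<in>{..min K (int (n 0))}. source_rate n i k p * norm (q (source n i k p))))
   (sources n)"
proof -
  have slice: "((\<lambda>k. source_rate n i k p * norm (q (source n i k p))) has_sum
      (\<Sum>\<^sub>\<infinity>k\<in>{..min K (int (n 0))}. source_rate n i k p * norm (q (source n i k p))))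
      {..min K (int (n 0))}" if "i \<in> {1..c}" for i p
    using source_term_summable[OF that] by (auto intro: has_sum_infsum)
  have row: "((\<lambda>(i, k). source_rate n i k p * norm (q (source n i k p))) has_sum
      (\<Sum>i=1..c. \<Sum>\<^sub>\<infinity>k\<in>{..min K (int (n 0))}. source_rate n i k p * norm (q (source n i k p))))
      ({1..c} \<times> {..min K (int (n 0))})" for p
    by (rule has_sum_Times_finite) (auto intro: slice)
  show ?thesis
    unfolding sources_def by (rule has_sum_Times_finite) (use row in \<open>auto simp: case_prod_unfold\<close>)
qed

lemma source_term_eq_0:
  assumes "abs_inflow q n = 0" and "(p, i, k) \<in> sources n"
  shows "source_rate n i k p * norm (q (source n i k p)) = 0"
proof -
  have "((\<lambda>(p, i, k). source_rate n i k p * norm (q (source n i k p))) has_sum abs_inflow q n) (sources n)"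
    unfolding abs_inflow_def using abs_inflow_has_sum by (intro has_sum_infsum has_sum_imp_summable)
  then have "(\<lambda>(p, i, k). source_rate n i k p * norm (q (source n i k p))) (p, i, k) = 0"
    by (rule nonneg_has_sum_le_0D)
       (use assms in \<open>auto simp: sources_def intro!: mult_nonneg_nonneg source_rate_nonneg\<close>)
  then show ?thesis by simp
qed

lemma abs_inflow_nonneg: "0 \<le> abs_inflow q n"
  unfolding abs_inflow_def sources_def
  by (rule infsum_nonneg) (auto intro!: mult_nonneg_nonneg source_rate_nonneg)

end

lemma solution_inflow_term_summable:
  assumes "q \<in> abs_conv_solutions c K a b cc d" and "n \<in> Wset c" and "i \<in> {1..c}"
  shows "(\<lambda>k. inflow_term q n i k) summable_on {..K}"
  using assms norm_le_infsum_norm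
  by (intro inflow_term_summable[of q "\<Sum>\<^sub>\<infinity>n\<in>Wset c. norm (q n)"]) (auto simp: abs_conv_solutions_def)

lemma inner_eq_add:
  assumes x: "x \<in> abs_conv_solutions c K a b cc d" and y: "y \<in> abs_conv_solutions c K a b cc d"
    and n: "n \<in> Wset c" "K \<le> int (n 0)"
  shows "inner_eq c K a b cc d (x + y) n"
proof -
  have "inflow_term (x + y) n i k = inflow_term x n i k + inflow_term y n i k" for i k
    by (simp add: inflow_term_def algebra_simps)
  then have "(\<Sum>i=1..c. \<Sum>\<^sub>\<infinity>k\<in>{..K}. inflow_term (x + y) n i k)
      = (\<Sum>i=1..c. (\<Sum>\<^sub>\<infinity>k\<in>{..K}. inflow_term x n i k) + (\<Sum>\<^sub>\<infinity>k\<in>{..K}. inflow_term y n i k))"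
    by (intro sum.cong refl) (simp add: infsum_add solution_inflow_term_summable x y n)
  moreover have "complex_of_real (total_rate n) * x n = (\<Sum>i=1..c. \<Sum>\<^sub>\<infinity>k\<in>{..K}. inflow_term x n i k)"
    and "complex_of_real (total_rate n) * y n = (\<Sum>i=1..c. \<Sum>\<^sub>\<infinity>k\<in>{..K}. inflow_term y n i k)"
    using x y n by (simp_all add: abs_conv_solutions_def inner_eq_iff)
  ultimately show ?thesis by (simp add: inner_eq_iff distrib_left sum.distrib)
qed

lemma inner_eq_cscale:
  assumes x: "x \<in> abs_conv_solutions c K a b cc d" and n: "n \<in> Wset c" "K \<le> int (n 0)"
  shows "inner_eq c K a b cc d (cscale z x) n"
proof -
  have "inflow_term (cscale z x) n i k = z * inflow_term x n i k" for i k
    by (simp add: inflow_term_def cscale_def algebra_simps)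
  then have "(\<Sum>i=1..c. \<Sum>\<^sub>\<infinity>k\<in>{..K}. inflow_term (cscale z x) n i k)
      = z * (\<Sum>i=1..c. \<Sum>\<^sub>\<infinity>k\<in>{..K}. inflow_term x n i k)"
    by (simp add: infsum_cmult_right' sum_distrib_left)
  moreover have "complex_of_real (total_rate n) * x n = (\<Sum>i=1..c. \<Sum>\<^sub>\<infinity>k\<in>{..K}. inflow_term x n i k)"
    using x n by (simp add: abs_conv_solutions_def inner_eq_iff)
  ultimately show ?thesis by (simp add: inner_eq_iff cscale_def mult.left_commute)
qed

lemma abs_conv_solutions_subspace: "module.subspace cscale (abs_conv_solutions c K a b cc d)"
proof -
  interpret fs: vector_space "cscale :: complex \<Rightarrow> ((nat \<Rightarrow> nat) \<Rightarrow> complex) \<Rightarrow> _"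
    by (rule vector_space_cscale)
  show ?thesis
  proof (rule fs.subspaceI)
    show "0 \<in> abs_conv_solutions c K a b cc d"
      by (simp add: abs_conv_solutions_def inner_eq_def)
  next
    fix x y assume x: "x \<in> abs_conv_solutions c K a b cc d" and y: "y \<in> abs_conv_solutions c K a b cc d"
    have "(\<lambda>n. norm ((x + y) n)) summable_on Wset c"
    proof (rule summable_on_comparison_test)
      show "(\<lambda>n. norm (x n) + norm (y n)) summable_on Wset c"
        using x y by (intro summable_on_add) (simp_all add: abs_conv_solutions_def)
    qed (simp_all add: norm_triangle_ineq)
    then show "x + y \<in> abs_conv_solutions c K a b cc d"
      using x y inner_eq_add by (simp add: abs_conv_solutions_def)
  next
    fix z x assume x: "x \<in> abs_conv_solutions c K a b cc d"
    have "(\<lambda>n. norm (cscale z x n)) summable_on Wset c"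
      using x summable_on_cmult_right[of "\<lambda>n. norm (x n)" "Wset c" "norm z"]
      by (simp add: abs_conv_solutions_def cscale_def norm_mult)
    then show "cscale z x \<in> abs_conv_solutions c K a b cc d"
      using x inner_eq_cscale by (simp add: abs_conv_solutions_def cscale_def)
  qed
qed

end

locale qbd_solution = qbd_rates +
  fixes q :: "(nat \<Rightarrow> nat) \<Rightarrow> complex"
  assumes solution: "q \<in> abs_conv_solutions c K a b cc d"
begin

lemma vanishes_outside: "n \<notin> Wset c \<Longrightarrow> q n = 0"
  using solution by (simp add: abs_conv_solutions_def)

lemma norm_summable: "(\<lambda>n. norm (q n)) summable_on Wset c"
  using solution by (simp add: abs_conv_solutions_def)

lemma norm_bounded: "\<forall>x. norm (q x) \<le> (\<Sum>\<^sub>\<infinity>n\<in>Wset c. norm (q n))"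
  using norm_le_infsum_norm[OF norm_summable] vanishes_outside by blast

lemmas source_term_summable = source_term_summable[OF norm_bounded]
   and abs_inflow_has_sum = abs_inflow_has_sum[OF norm_bounded]
   and abs_inflow_nonneg = abs_inflow_nonneg[OF norm_bounded]
   and source_term_eq_0 = source_term_eq_0[OF norm_bounded]
   and norm_inflow_term_summable = norm_inflow_term_summable[OF norm_bounded]

lemma summable_norm_mult_rate:
  assumes "\<And>n. n \<in> Wset c \<Longrightarrow> 0 \<le> r n \<and> r n \<le> total_rate n"
  shows "(\<lambda>n. norm (q n) * r n) summable_on Wset c"
proof (rule summable_on_comparison_test)
  show "(\<lambda>n. norm (q n) * rate_bound) summable_on Wset c"
    by (rule summable_on_cmult_left[OF norm_summable])
  fix n assume "n \<in> Wset c"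
  then have "0 \<le> r n" and "r n \<le> rate_bound"
    using assms total_rate_bounds order_trans by blast+
  then show "norm (q n) * r n \<le> norm (q n) * rate_bound" and "0 \<le> norm (q n) * r n"
    by (simp_all add: mult_left_mono)
qed

lemma norm_mult_total_rate_le_abs_inflow:
  assumes n: "n \<in> Wset c" and level: "K \<le> int (n 0)"
  shows "norm (q n) * total_rate n \<le> abs_inflow q n"
proof -
  let ?r = "\<lambda>i k p. source_rate n i k p * norm (q (source n i k p))"
  have eq: "complex_of_real (total_rate n) * q n = (\<Sum>i=1..c. \<Sum>\<^sub>\<infinity>k\<in>{..K}. inflow_term q n i k)"
    using solution n level inner_eq_iff by (simp add: abs_conv_solutions_def)
  have "norm (q n) * total_rate n = norm (complex_of_real (total_rate n) * q n)"
    using total_rate_bounds[OF n] by (simp add: norm_mult)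
  also have "\<dots> = norm (\<Sum>i=1..c. \<Sum>\<^sub>\<infinity>k\<in>{..K}. inflow_term q n i k)"
    by (simp only: eq)
  also have "\<dots> \<le> (\<Sum>i=1..c. \<Sum>\<^sub>\<infinity>k\<in>{..K}. norm (inflow_term q n i k))"
    by (intro order.trans[OF norm_sum] sum_mono norm_infsum_bound
        norm_inflow_term_summable[OF n]) auto
  also have "\<dots> \<le> (\<Sum>i=1..c. \<Sum>\<^sub>\<infinity>k\<in>{..K}. ?r i k 0 + ?r i k 1)"
    by (intro sum_mono infsum_mono norm_inflow_term_summable[OF n]
        summable_on_add source_term_summable norm_inflow_term_le n) auto
  also have "\<dots> = (\<Sum>i=1..c. (\<Sum>\<^sub>\<infinity>k\<in>{..K}. ?r i k 0) + (\<Sum>\<^sub>\<infinity>k\<in>{..K}. ?r i k 1))"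
    by (intro sum.cong refl infsum_add source_term_summable) auto
  also have "\<dots> = abs_inflow q n"
    using infsumI[OF abs_inflow_has_sum[of n]] level
    by (simp add: abs_inflow_def sum.distrib min_absorb1)
  finally show ?thesis .
qed

lemma has_sum_abs_inflow:
  "(abs_inflow q has_sum (\<Sum>\<^sub>\<infinity>m\<in>Wset c. norm (q m) * internal_rate m)) (Wset c)"
proof -
  define outflow where "outflow = (\<lambda>(m, j, i, k). jump_rate a b cc d m i k j * norm (q m))"
  define inflow where "inflow = (\<lambda>(n, p, i, k). source_rate n i k p * norm (q (source n i k p)))"
  have outflow_slice: "((\<lambda>y. outflow (m, y)) has_sum (norm (q m) * internal_rate m)) (jumps m)"
    if m: "m \<in> Wset c" for m
  proof (rule has_sum_finiteI)
    show "finite (jumps m)" by (simp add: jumps_def)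
    show "norm (q m) * internal_rate m = (\<Sum>y\<in>jumps m. outflow (m, y))"
      by (simp add: outflow_def sum_jump_rates[OF m, symmetric] sum_distrib_left case_prod_unfold
          mult.commute)
  qed
  have "(\<lambda>m. norm (q m) * internal_rate m) summable_on Wset c"
    by (rule summable_norm_mult_rate) (use total_rate_split exit_rate_nonneg internal_rate_nonneg in auto)
  then have outflow_sum: "(outflow has_sum (\<Sum>\<^sub>\<infinity>m\<in>Wset c. norm (q m) * internal_rate m)) (Sigma (Wset c) jumps)"
    using outflow_slice
    by (intro has_sum_SigmaI[OF outflow_slice] has_sum_infsum summable_on_SigmaI[OF outflow_slice])
       (auto simp: outflow_def jumps_def intro!: mult_nonneg_nonneg jump_rate_nonneg)
  \<comment> \<open>A state n with a source of n is the same as that source together with the jump it makes.\<close>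
  have "(inflow has_sum (\<Sum>\<^sub>\<infinity>m\<in>Wset c. norm (q m) * internal_rate m)) (Sigma (Wset c) sources)"
  proof -
    let ?to_jump = "\<lambda>(n, p, i, k). (source n i k p, n i, i, k)"
      and ?to_source = "\<lambda>(m, j, i, k). ((shift0 m k)(i := j), m i, i, k)"
    have inverse_sources: "?to_source (?to_jump x) = x" if "x \<in> Sigma (Wset c) sources" for x
      using that by (auto simp: sources_def source_def shift0_def fun_eq_iff)
    have maps_sources: "?to_jump x \<in> Sigma (Wset c) jumps" if "x \<in> Sigma (Wset c) sources" for x
      using that Wset_binary by (auto simp: sources_def jumps_def source_def intro!: Wset_shift0_upd)
    have inverse_jumps: "?to_jump (?to_source y) = y" if "y \<in> Sigma (Wset c) jumps" for y
      using that by (auto simp: jumps_def source_def shift0_def fun_eq_iff)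
    have maps_jumps: "?to_source y \<in> Sigma (Wset c) sources" if "y \<in> Sigma (Wset c) jumps" for y
      using that Wset_binary by (auto simp: sources_def jumps_def intro!: Wset_shift0_upd)
    have "outflow (?to_jump x) = inflow x" if "x \<in> Sigma (Wset c) sources" for x
      by (cases x rule: prod_cases4) (simp add: inflow_def outflow_def source_rate_def)
    from has_sum_reindex_bij_witness[of "Sigma (Wset c) sources" ?to_source ?to_jump
        "Sigma (Wset c) jumps" outflow inflow,
        OF inverse_sources maps_sources inverse_jumps maps_jumps this refl]
    show ?thesis using outflow_sum by blast
  qed
  then show ?thesis
    by (rule has_sum_SigmaD) (use abs_inflow_has_sum in \<open>auto simp: abs_inflow_def inflow_def
        intro: has_sum_infsum has_sum_imp_summable\<close>)
qed

context
  assumes vanishes_below_K: "\<forall>n\<in>Wset c. int (n 0) < K \<longrightarrow> q n = 0"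
begin

lemma balance:
  assumes "n \<in> Wset c"
  shows "abs_inflow q n = norm (q n) * total_rate n" and "norm (q n) * exit_rate n = 0"
proof -
  let ?F = "abs_inflow q" and ?G = "\<lambda>n. norm (q n) * total_rate n"
    and ?P = "\<lambda>n. norm (q n) * internal_rate n" and ?H = "\<lambda>n. norm (q n) * exit_rate n"
  have G_le_F: "?G n \<le> ?F n" if "n \<in> Wset c" for n
    using norm_mult_total_rate_le_abs_inflow[OF that] vanishes_below_K abs_inflow_nonneg that
    by (cases "K \<le> int (n 0)") auto
  have P: "(?P has_sum infsum ?P (Wset c)) (Wset c)" and H: "(?H has_sum infsum ?H (Wset c)) (Wset c)"
    by (auto intro!: has_sum_infsum summable_norm_mult_rate
        simp: total_rate_split internal_rate_nonneg exit_rate_nonneg)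
  have G: "(?G has_sum infsum ?P (Wset c) + infsum ?H (Wset c)) (Wset c)"
    by (rule has_sum_cong[THEN iffD1, OF _ has_sum_add[OF P H]]) (simp add: total_rate_split distrib_left)
  have F_minus_G: "((\<lambda>n. ?F n - ?G n) has_sum - infsum ?H (Wset c)) (Wset c)"
    using has_sum_add[OF has_sum_abs_inflow has_sum_uminusI[OF G]] by simp
  have "0 \<le> infsum ?H (Wset c)"
    by (rule has_sum_nonneg[OF H]) (simp add: exit_rate_nonneg)
  moreover have "0 \<le> - infsum ?H (Wset c)"
    by (rule has_sum_nonneg[OF F_minus_G]) (simp add: G_le_F)
  ultimately have H0: "infsum ?H (Wset c) = 0" by linarith
  have "?F n - ?G n = 0"
    by (rule nonneg_has_sum_le_0D[OF F_minus_G _ _ assms]) (simp_all add: H0 G_le_F)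
  then show "?F n = ?G n" by simp
  show "?H n = 0"
    by (rule nonneg_has_sum_le_0D[OF H _ _ assms]) (simp_all add: H0 exit_rate_nonneg)
qed

lemma exit_rate_eq_0:
  assumes "n \<in> Wset c" and "q n \<noteq> 0"
  shows "exit_rate n = 0"
  using balance(2)[OF assms(1)] assms(2) by simp

lemma jump_into_zero:
  assumes m: "m \<in> Wset c" and i: "i \<in> {1..c}" and k: "k \<in> {- int (m 0)..K}" and j: "j \<le> 1"
    and target: "q ((shift0 m k)(i := j)) = 0" and rate: "jump_rate a b cc d m i k j \<noteq> 0"
  shows "q m = 0"
proof -
  define n where "n = (shift0 m k)(i := j)"
  have n: "n \<in> Wset c" using Wset_shift0_upd[OF m i j] by (simp add: n_def)
  have "i \<noteq> 0" using i by auto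
  then have src: "source n i k (m i) = m" and ni: "n i = j" and "int (n 0) = int (m 0) + k"
    using k by (auto simp: n_def source_def shift0_def fun_eq_iff)
  then have "(m i, i, k) \<in> sources n"
    using Wset_binary[OF m i] i k by (auto simp: sources_def)
  moreover have "abs_inflow q n = 0"
    using balance(1)[OF n] target by (simp add: n_def)
  ultimately have "source_rate n i k (m i) * norm (q (source n i k (m i))) = 0"
    using source_term_eq_0 by blast
  then show ?thesis using rate by (simp add: source_rate_def src ni)
qed

lemma vanishing_solution_eq_0:
  fixes V :: "'v set" and Q :: "'v + (nat \<Rightarrow> nat) \<Rightarrow> 'v + (nat \<Rightarrow> nat) \<Rightarrow> real"
  assumes "finite V"
    and Q_nonneg: "\<forall>x\<in>Inl ` V \<union> Inr ` Wset c. \<forall>y\<in>Inl ` V \<union> Inr ` Wset c. x \<noteq> y \<longrightarrow> Q x y \<ge> 0"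
    and Q_WW: "\<forall>n\<in>Wset c. \<forall>m\<in>Wset c. m \<noteq> n \<longrightarrow>
        Q (Inr n) (Inr m) =
          (\<Sum>i=1..c. \<Sum>k\<in>{- int (n 0)..K}. \<Sum>j\<in>{0,1}.
             if (shift0 n k)(i := j) = m then jump_rate a b cc d n i k j else 0)"
    and Q_WV: "\<forall>n\<in>Wset c. (\<Sum>v\<in>V. Q (Inr n) (Inl v)) =
        (\<Sum>i=1..c. \<Sum>\<^sub>\<infinity>k\<in>{..- int (n 0) - 1}.
           (1 - real (n i)) * (a k i + b k i) + real (n i) * (cc k i + d k i))"
    and irreducible: "irreducible_ctmc (Inl ` V \<union> Inr ` Wset c) Q"
  shows "q = 0"
proof -
  define f where "f x = (case x of Inl _ \<Rightarrow> 0 | Inr n \<Rightarrow> q n)" for x :: "'v + (nat \<Rightarrow> nat)"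
  have zero_state: "(\<lambda>_. 0) \<in> Wset c" by (simp add: Wset_def)
  have zero_on_W: "f (Inr n) = 0" if "n \<in> Wset c" for n
  proof (rule irreducible_ctmc_zero_propagation[OF irreducible, of "Inr (\<lambda>_. 0)"])
    show "f (Inr (\<lambda>_. 0)) = 0" using vanishes_below_K zero_state K_pos by (simp add: f_def)
    fix u v assume u: "u \<in> Inl ` V \<union> Inr ` Wset c" and v: "v \<in> Inl ` V \<union> Inr ` Wset c"
      and "u \<noteq> v" and pos: "Q u v > 0" and "f v = 0"
    show "f u = 0"
    proof (cases u)
      case (Inr m)
      then have m: "m \<in> Wset c" using u by auto
      show ?thesis
      proof (cases v)
        case (Inl w)
        then have "w \<in> V" and "0 < Q (Inr m) (Inl w)" using v pos \<open>u = Inr m\<close> by auto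
        then have "0 < (\<Sum>v\<in>V. Q (Inr m) (Inl v))"
          by (intro sum_pos2 \<open>finite V\<close>) (use Q_nonneg m in auto)
        then have "0 < exit_rate m"
          using Q_WV m by (simp add: exit_rate_def type_rate_def)
        then show ?thesis using exit_rate_eq_0[OF m] \<open>u = Inr m\<close> by (auto simp: f_def)
      next
        case (Inr n)
        then have n: "n \<in> Wset c" and "q n = 0" using v \<open>f v = 0\<close> by (auto simp: f_def)
        have "n \<noteq> m" using \<open>u \<noteq> v\<close> \<open>u = Inr m\<close> Inr by simp
        from pos have "Q (Inr m) (Inr n) \<noteq> 0" unfolding \<open>u = Inr m\<close> Inr by simp
        then obtain i k j where "i \<in> {1..c}" "k \<in> {- int (m 0)..K}" "j \<le> 1"
          "(shift0 m k)(i := j) = n" "jump_rate a b cc d m i k j \<noteq> 0"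
          unfolding Q_WW[rule_format, OF m n \<open>n \<noteq> m\<close>] by (rule jump_with_nonzero_rate)
        then have "q m = 0" using jump_into_zero[OF m] \<open>q n = 0\<close> by blast
        then show ?thesis by (simp add: f_def \<open>u = Inr m\<close>)
      qed
    qed (simp add: f_def)
  qed (use zero_state that in auto)
  show ?thesis
  proof
    fix n show "q n = 0 n"
      using zero_on_W[of n] vanishes_outside[of n] by (cases "n \<in> Wset c") (simp_all add: f_def)
  qed
qed

end

end

theorem corollary1:
  fixes c :: nat and K :: int and V :: "'v set"
    and a b cc d :: "int \<Rightarrow> nat \<Rightarrow> real"
    and Q :: "'v + (nat \<Rightarrow> nat) \<Rightarrow> 'v + (nat \<Rightarrow> nat) \<Rightarrow> real"
  assumes c_pos: "c \<ge> 1" and K_pos: "K \<ge> 1"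
    and V_fin: "finite V"
    and rates_nonneg: "\<forall>i\<in>{1..c}. \<forall>k\<le>K. a k i \<ge> 0 \<and> b k i \<ge> 0 \<and> cc k i \<ge> 0 \<and> d k i \<ge> 0"
    and rates_fin: "\<forall>i\<in>{1..c}. (\<lambda>k. a k i) summable_on {..K} \<and> (\<lambda>k. b k i) summable_on {..K}
                      \<and> (\<lambda>k. cc k i) summable_on {..K} \<and> (\<lambda>k. d k i) summable_on {..K}"
    and Q_nonneg: "\<forall>x\<in>Inl ` V \<union> Inr ` Wset c. \<forall>y\<in>Inl ` V \<union> Inr ` Wset c. x \<noteq> y \<longrightarrow> Q x y \<ge> 0"
    and Q_WW: "\<forall>n\<in>Wset c. \<forall>m\<in>Wset c. m \<noteq> n \<longrightarrow>
        Q (Inr n) (Inr m) =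
          (\<Sum>i=1..c. \<Sum>k\<in>{- int (n 0)..K}. \<Sum>j\<in>{0,1}.
             if (shift0 n k)(i := j) = m then jump_rate a b cc d n i k j else 0)"
    and Q_WV: "\<forall>n\<in>Wset c. (\<Sum>v\<in>V. Q (Inr n) (Inl v)) =
        (\<Sum>i=1..c. \<Sum>\<^sub>\<infinity>k\<in>{..- int (n 0) - 1}.
           (1 - real (n i)) * (a k i + b k i) + real (n i) * (cc k i + d k i))"
    and Q_VW: "\<forall>v\<in>V. \<forall>m\<in>Wset c. int (m 0) \<ge> K \<longrightarrow> Q (Inl v) (Inr m) = 0"
    and Q_V_fin: "\<forall>v\<in>V. (\<lambda>y. Q (Inl v) y) summable_on (Inl ` V \<union> Inr ` Wset c - {Inl v})"
    and ergodic: "ergodic_ctmc (Inl ` V \<union> Inr ` Wset c) Q"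
  shows "\<forall>B \<subseteq> abs_conv_solutions c K a b cc d.
           \<not> module.dependent cscale B \<longrightarrow> finite B \<and> card B \<le> 2 ^ c * nat K"
proof (intro allI impI)
  interpret qbd_rates c K a b cc d
    using K_pos rates_nonneg rates_fin by unfold_locales
  have irreducible: "irreducible_ctmc (Inl ` V \<union> Inr ` Wset c) Q"
    using ergodic by (simp add: ergodic_ctmc_def)
  have determined: "f = 0"
    if "f \<in> abs_conv_solutions c K a b cc d" and "\<forall>n\<in>{n \<in> Wset c. int (n 0) < K}. f n = 0" for f
  proof -
    interpret qbd_solution c K a b cc d f
      using qbd_rates_axioms that(1) by (simp add: qbd_solution_def qbd_solution_axioms_def)
    show ?thesis
      using vanishing_solution_eq_0[OF _ V_fin Q_nonneg Q_WW Q_WV irreducible] that(2) by blast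
  qed
  fix B assume "B \<subseteq> abs_conv_solutions c K a b cc d" and "\<not> module.dependent cscale B"
  then have "finite B \<and> card B \<le> card {n \<in> Wset c. int (n 0) < K}"
    by (intro independent_card_le_determining_set[OF abs_conv_solutions_subspace _ determined])
       (use card_low_levels in auto)
  then show "finite B \<and> card B \<le> 2 ^ c * nat K"
    using card_low_levels[of c K] by linarith
qed

end
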